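(* For $|q|<1$ and every integer $n\ge1$, $$\frac{1}{(n)_{q^2}!\,(n+1)_{q^2}!}=(1-q^2)^n\sum_{0\le\lambda_n\le\lambda_{n-1}\le\dots\le\lambda_1}C_{\lambda}(q)\,q^{4(\lambda_1+2\lambda_2+\dots+n\lambda_n)},$$ where the sum runs over all $n$-tuples of nonnegative integers $\lambda_1\ge\dots\ge\lambda_n\ge0$, and $C_\lambda(q)=\prod_{i}\frac{1}{(m_i)_{q^2}!}$, where $m_1,m_2,\dots$ are the multiplicities of the distinct values occurring among $\lambda_1,\dots,\lambda_n$ (zeros included).
   Context: $(a)_{q^2}=\frac{q^{2a}-1}{q^2-1}$, $(a)_{q^2}!=(1)_{q^2}(2)_{q^2}\cdots(a)_{q^2}$, $(0)_{q^2}!=1$. Equivalently $C_\lambda(q)=\prod_{i\ge0}\frac1{(\lambda'_i-\lambda'_{i+1})_{q^2}!}$ with $\lambda'_0=n$ and $\lambda'_j=\#\{k:\lambda_k\ge j\}$ for $j\ge1$. *)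

theory Defs
  imports "HOL-Analysis.Analysis"
begin

definition qint2 :: "nat \<Rightarrow> complex \<Rightarrow> complex" where
  "qint2 a q = (q ^ (2 * a) - 1) / (q\<^sup>2 - 1)"

definition qfact2 :: "nat \<Rightarrow> complex \<Rightarrow> complex" where
  "qfact2 a q = (\<Prod>k = 1..a. qint2 k q)"

definition parts :: "nat \<Rightarrow> nat list set" where
  "parts n = {xs. length xs = n \<and> sorted (rev xs)}"

definition Clam :: "nat list \<Rightarrow> complex \<Rightarrow> complex" where
  "Clam xs q = (\<Prod>v \<in> set xs. 1 / qfact2 (count_list xs v) q)"

definition wt :: "nat list \<Rightarrow> nat" where
  "wt xs = (\<Sum>i < length xs. (i + 1) * xs ! i)"

end

theory Submission
  imports Defs
begin

(*
  Write t = q^2 and F n for the series over partitions with n parts. Removing the first column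
  of the Young diagram (subtracting 1 from the k positive parts and dropping the n - k zeros) is
  a bijection onto the partitions with k <= n parts, and it multiplies the summand by
  t^(k(k+1)) / (n-k)_t!. Hence F n = sum_{k<=n} t^(k(k+1)) / (n-k)_t! * F k; since the coefficient
  t^(n(n+1)) of F n on the right is not 1, this recurrence and F 0 = 1 determine F.

  The closed form satisfies the same recurrence. In terms of (t;t)_m this is the finite identity
  sum_k [n,k]_t t^(k(k+1)) (t^(k+2);t)_(n-k) = 1, the case z = t of
  sum_k [n,k]_t z^k t^(k^2) (z t^(k+1);t)_(n-k) = 1, which follows by induction on n from the
  Pascal rule for Gaussian binomials.
*)

section \<open>Gaussian binomial coefficients\<close>

definition qpoch :: "'a::comm_ring_1 \<Rightarrow> 'a \<Rightarrow> nat \<Rightarrow> 'a" where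
  "qpoch z t m = (\<Prod>i<m. 1 - z * t ^ i)"

lemma qpoch_0 [simp]: "qpoch z t 0 = 1"
  by (simp add: qpoch_def)

lemma qpoch_Suc: "qpoch z t (Suc m) = qpoch z t m * (1 - z * t ^ m)"
  by (simp add: qpoch_def)

lemma qpoch_add: "qpoch z t (a + b) = qpoch z t a * qpoch (z * t ^ a) t b"
  by (induction b) (simp_all add: qpoch_Suc power_add mult_ac)

lemma qpoch_Suc_diff:
  assumes "k \<le> n"
  shows "qpoch (z * t ^ Suc k) t (Suc n - k) = qpoch (z * t ^ Suc k) t (n - k) * (1 - z * t ^ Suc n)"
proof -
  have "Suc n - k = Suc (n - k)" and "Suc k + (n - k) = Suc n"
    using assms by simp_all
  then show ?thesis
    by (simp add: qpoch_Suc mult.assoc flip: power_add)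
qed

fun qbinom :: "'a::comm_ring_1 \<Rightarrow> nat \<Rightarrow> nat \<Rightarrow> 'a" where
  "qbinom t 0 k = (if k = 0 then 1 else 0)"
| "qbinom t (Suc n) 0 = 1"
| "qbinom t (Suc n) (Suc k) = qbinom t n (Suc k) + t ^ (n - k) * qbinom t n k"

lemma qbinom_0_right [simp]: "qbinom t n 0 = 1"
  by (cases n) simp_all

lemma qbinom_eq_0: "n < k \<Longrightarrow> qbinom t n k = 0"
proof (induction n arbitrary: k)
  case (Suc n)
  then show ?case by (cases k) simp_all
qed simp

lemma qbinom_diag [simp]: "qbinom t n n = 1"
  by (induction n) (simp_all add: qbinom_eq_0)

lemma qbinom_qpoch:
  "k \<le> n \<Longrightarrow> qbinom t n k * qpoch t t k * qpoch t t (n - k) = qpoch t t n"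
proof (induction n arbitrary: k)
  case (Suc n)
  show ?case
  proof (cases k)
    case (Suc j)
    show ?thesis
    proof (cases "j = n")
      case True
      with Suc show ?thesis by (simp add: qbinom_eq_0)
    next
      case False
      with \<open>k = Suc j\<close> Suc.prems have "j < n" by simp
      then have diff: "n - j = Suc (n - Suc j)" and "n - j + Suc j = Suc n"
        by simp_all
      then have pow: "t ^ (n - j) * t ^ Suc j = t ^ Suc n"
        by (metis power_add)
      have IH1: "qbinom t n (Suc j) * qpoch t t (Suc j) * qpoch t t (n - Suc j) = qpoch t t n"
        and IH2: "qbinom t n j * qpoch t t j * qpoch t t (n - j) = qpoch t t n"
        using Suc.IH \<open>j < n\<close> by simp_all
      have split: "qpoch t t (n - j) = qpoch t t (n - Suc j) * (1 - t ^ (n - j))"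
        unfolding diff by (simp add: qpoch_Suc)
      have "qbinom t (Suc n) k * qpoch t t k * qpoch t t (Suc n - k)
          = (qbinom t n (Suc j) + t ^ (n - j) * qbinom t n j) * qpoch t t (Suc j) * qpoch t t (n - j)"
        using \<open>k = Suc j\<close> by simp
      also have "\<dots> = (qbinom t n (Suc j) * qpoch t t (Suc j) * qpoch t t (n - Suc j)) * (1 - t ^ (n - j))
            + t ^ (n - j) * (1 - t ^ Suc j) * (qbinom t n j * qpoch t t j * qpoch t t (n - j))"
        unfolding split qpoch_Suc[of t t j] by (simp add: algebra_simps)
      also have "\<dots> = qpoch t t n * (1 - t ^ (n - j) * t ^ Suc j)"
        unfolding IH1 IH2 by (simp add: algebra_simps)
      also have "\<dots> = qpoch t t (Suc n)"
        unfolding pow qpoch_Suc by simp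
      finally show ?thesis .
    qed
  qed simp
qed simp

definition qbinom_sum :: "'a::comm_ring_1 \<Rightarrow> nat \<Rightarrow> 'a \<Rightarrow> 'a" where
  "qbinom_sum t n z = (\<Sum>k\<le>n. qbinom t n k * z ^ k * t ^ k\<^sup>2 * qpoch (z * t ^ Suc k) t (n - k))"

lemma qbinom_sum_mult:
  "(\<Sum>k\<le>Suc n. qbinom t n k * z ^ k * t ^ k\<^sup>2 * qpoch (z * t ^ Suc k) t (Suc n - k))
     = (1 - z * t ^ Suc n) * qbinom_sum t n z"
proof -
  have "(\<Sum>k\<le>n. qbinom t n k * z ^ k * t ^ k\<^sup>2 * qpoch (z * t ^ Suc k) t (Suc n - k))
      = (1 - z * t ^ Suc n) * qbinom_sum t n z"
    unfolding qbinom_sum_def sum_distrib_left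
  proof (rule sum.cong[OF refl])
    fix k assume "k \<in> {..n}"
    then show "qbinom t n k * z ^ k * t ^ k\<^sup>2 * qpoch (z * t ^ Suc k) t (Suc n - k)
        = (1 - z * t ^ Suc n) * (qbinom t n k * z ^ k * t ^ k\<^sup>2 * qpoch (z * t ^ Suc k) t (n - k))"
      using qpoch_Suc_diff[of k n z t] by (simp add: mult_ac)
  qed
  then show ?thesis
    by (simp add: qbinom_eq_0)
qed

lemma qbinom_sum_mult_shift:
  "(\<Sum>k\<le>n. t ^ (n - k) * qbinom t n k * z ^ Suc k * t ^ (Suc k)\<^sup>2 * qpoch (z * t ^ Suc (Suc k)) t (n - k))
     = z * t ^ Suc n * qbinom_sum t n (z * t)"
  unfolding qbinom_sum_def sum_distrib_left
proof (rule sum.cong[OF refl])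
  fix k assume "k \<in> {..n}"
  then have "n - k + (Suc k)\<^sup>2 = Suc n + k + k\<^sup>2"
    by (simp add: power2_eq_square)
  then have exp: "t ^ (n - k) * t ^ (Suc k)\<^sup>2 = t ^ Suc n * t ^ k * t ^ k\<^sup>2"
    by (metis power_add)
  have "t ^ (n - k) * qbinom t n k * z ^ Suc k * t ^ (Suc k)\<^sup>2 * qpoch (z * t ^ Suc (Suc k)) t (n - k)
      = (t ^ (n - k) * t ^ (Suc k)\<^sup>2) * (z ^ Suc k * qbinom t n k * qpoch (z * t ^ Suc (Suc k)) t (n - k))"
    by (simp add: mult_ac)
  also have "\<dots> = z * t ^ Suc n
      * (qbinom t n k * (z * t) ^ k * t ^ k\<^sup>2 * qpoch (z * t * t ^ Suc k) t (n - k))"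
    unfolding exp by (simp add: power_mult_distrib mult_ac)
  finally show "t ^ (n - k) * qbinom t n k * z ^ Suc k * t ^ (Suc k)\<^sup>2 * qpoch (z * t ^ Suc (Suc k)) t (n - k)
      = z * t ^ Suc n * (qbinom t n k * (z * t) ^ k * t ^ k\<^sup>2 * qpoch (z * t * t ^ Suc k) t (n - k))" .
qed

lemma qbinom_sum_Suc:
  "qbinom_sum t (Suc n) z = (1 - z * t ^ Suc n) * qbinom_sum t n z + z * t ^ Suc n * qbinom_sum t n (z * t)"
proof -
  have "qbinom_sum t (Suc n) z
      = (\<Sum>k\<le>Suc n. qbinom t n k * z ^ k * t ^ k\<^sup>2 * qpoch (z * t ^ Suc k) t (Suc n - k))
        + (\<Sum>k\<le>n. t ^ (n - k) * qbinom t n k * z ^ Suc k * t ^ (Suc k)\<^sup>2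
                    * qpoch (z * t ^ Suc (Suc k)) t (n - k))"
    unfolding qbinom_sum_def by (subst (1 2) sum.atMost_Suc_shift) (simp add: sum.distrib algebra_simps)
  then show ?thesis
    by (simp only: qbinom_sum_mult qbinom_sum_mult_shift)
qed

lemma qbinom_sum_eq_1: "qbinom_sum t n z = 1"
proof (induction n arbitrary: z)
  case 0
  then show ?case by (simp add: qbinom_sum_def)
next
  case (Suc n)
  then show ?case by (simp add: qbinom_sum_Suc algebra_simps)
qed

section \<open>The closed form\<close>

lemma qpoch_nonzero:
  fixes t :: "'a::real_normed_field"
  assumes "norm t < 1"
  shows "qpoch t t m \<noteq> 0"
proof -
  have "t * t ^ i \<noteq> 1" for i
  proof
    assume "t * t ^ i = 1"
    then have "norm t ^ Suc i = 1"
      by (metis norm_one norm_power power_Suc)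
    moreover have "norm t ^ Suc i < 1"
      using assms power_less_one_iff[OF norm_ge_zero, of t "Suc i"] by simp
    ultimately show False by simp
  qed
  then show ?thesis by (simp add: qpoch_def)
qed

lemma sum_qpoch_fractions:
  fixes t :: "'a::field"
  assumes nz: "\<And>m. qpoch t t m \<noteq> 0"
  shows "(\<Sum>k\<le>n. t ^ (k * Suc k) / (qpoch t t k * qpoch t t (Suc k) * qpoch t t (n - k)))
       = 1 / (qpoch t t n * qpoch t t (Suc n))"
proof -
  have "qpoch t t n * qpoch t t (Suc n)
      * (\<Sum>k\<le>n. t ^ (k * Suc k) / (qpoch t t k * qpoch t t (Suc k) * qpoch t t (n - k)))
      = qbinom_sum t n t"
    unfolding qbinom_sum_def sum_distrib_left
  proof (rule sum.cong[OF refl])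
    fix k assume "k \<in> {..n}"
    then have k: "k \<le> n" by simp
    have binom: "qbinom t n k = qpoch t t n / (qpoch t t k * qpoch t t (n - k))"
      using qbinom_qpoch[OF k, of t] nz by (simp add: field_simps)
    have "qpoch t t (Suc n) = qpoch t t (Suc k) * qpoch (t * t ^ Suc k) t (n - k)"
      using qpoch_add[of t t "Suc k" "n - k"] k by simp
    then have tail: "qpoch (t * t ^ Suc k) t (n - k) = qpoch t t (Suc n) / qpoch t t (Suc k)"
      using nz by (simp add: field_simps)
    have pow: "t ^ (k * Suc k) = t ^ k * t ^ k\<^sup>2"
      by (simp add: power2_eq_square flip: power_add)
    show "qpoch t t n * qpoch t t (Suc n)
        * (t ^ (k * Suc k) / (qpoch t t k * qpoch t t (Suc k) * qpoch t t (n - k)))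
        = qbinom t n k * t ^ k * t ^ k\<^sup>2 * qpoch (t * t ^ Suc k) t (n - k)"
      unfolding binom tail pow using nz by (simp add: field_simps)
  qed
  then show ?thesis
    using nz by (simp add: qbinom_sum_eq_1 field_simps)
qed

lemma norm_power2_less_1: "norm q < 1 \<Longrightarrow> norm (q\<^sup>2) < 1"
  for q :: "'a::real_normed_div_algebra"
  by (simp add: norm_power abs_square_less_1)

lemma qint2_eq: "qint2 k q = (1 - (q\<^sup>2) ^ k) / (1 - q\<^sup>2)"
  unfolding qint2_def power_mult by (metis minus_diff_eq minus_divide_divide)

lemma qfact2_0 [simp]: "qfact2 0 q = 1"
  by (simp add: qfact2_def)

lemma qfact2_Suc: "qfact2 (Suc m) q = qfact2 m q * qint2 (Suc m) q"
  by (simp add: qfact2_def)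

lemma qfact2_eq_qpoch:
  assumes "q\<^sup>2 \<noteq> 1"
  shows "qfact2 m q = qpoch (q\<^sup>2) (q\<^sup>2) m / (1 - q\<^sup>2) ^ m"
proof (induction m)
  case (Suc m)
  define t where "t = q\<^sup>2"
  have "qfact2 (Suc m) q = qpoch t t m / (1 - t) ^ m * ((1 - t ^ Suc m) / (1 - t))"
    using Suc by (simp add: qfact2_Suc qint2_eq t_def)
  also have "\<dots> = qpoch t t (Suc m) / (1 - t) ^ Suc m"
    using assms by (simp add: qpoch_Suc t_def)
  finally show ?case
    unfolding t_def .
qed simp

lemma qfact2_recurrence:
  assumes q: "norm q < 1"
  shows "1 / ((1 - q\<^sup>2) ^ n * qfact2 n q * qfact2 (Suc n) q)
       = (\<Sum>k\<le>n. (q\<^sup>2) ^ (k * Suc k) / qfact2 (n - k) q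
                  * (1 / ((1 - q\<^sup>2) ^ k * qfact2 k q * qfact2 (Suc k) q)))"
proof -
  define t where "t = q\<^sup>2"
  define u where "u = 1 - t"
  have "norm t < 1"
    unfolding t_def by (rule norm_power2_less_1[OF q])
  then have u: "u \<noteq> 0" and nz: "\<And>m. qpoch t t m \<noteq> 0"
    using qpoch_nonzero unfolding u_def by auto
  have qfact: "qfact2 m q = qpoch t t m / u ^ m" for m
    unfolding t_def u_def by (rule qfact2_eq_qpoch) (use u t_def u_def in simp)
  have "(\<Sum>k\<le>n. t ^ (k * Suc k) / qfact2 (n - k) q * (1 / (u ^ k * qfact2 k q * qfact2 (Suc k) q)))
      = (\<Sum>k\<le>n. u ^ Suc n * (t ^ (k * Suc k) / (qpoch t t k * qpoch t t (Suc k) * qpoch t t (n - k))))"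
  proof (rule sum.cong[OF refl])
    fix k assume "k \<in> {..n}"
    then have "u ^ Suc n = u ^ (n - k) * u ^ Suc k"
      by (simp flip: power_add)
    then show "t ^ (k * Suc k) / qfact2 (n - k) q * (1 / (u ^ k * qfact2 k q * qfact2 (Suc k) q))
        = u ^ Suc n * (t ^ (k * Suc k) / (qpoch t t k * qpoch t t (Suc k) * qpoch t t (n - k)))"
      unfolding qfact using nz u by (simp add: field_simps)
  qed
  also have "\<dots> = 1 / (u ^ n * qfact2 n q * qfact2 (Suc n) q)"
    unfolding sum_distrib_left[symmetric] sum_qpoch_fractions[OF nz] qfact
    using nz u by (simp add: field_simps)
  finally show ?thesis
    unfolding t_def u_def by simp
qed

section \<open>Removing the first column of a partition\<close>

lemma in_parts_iff: "xs \<in> parts n \<longleftrightarrow> length xs = n \<and> sorted_wrt (\<ge>) xs"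
  unfolding parts_def by (simp add: sorted_wrt_rev)

definition add_column :: "nat \<Rightarrow> nat list \<Rightarrow> nat list" where
  "add_column n ys = map Suc ys @ replicate (n - length ys) 0"

definition drop_column :: "nat list \<Rightarrow> nat list" where
  "drop_column xs = map (\<lambda>x. x - 1) (takeWhile ((<) 0) xs)"

lemma sorted_desc_eq_takeWhile_pos_append_zeros:
  "sorted_wrt (\<ge>) xs \<Longrightarrow>
   xs = takeWhile ((<) 0) xs @ replicate (length xs - length (takeWhile ((<) 0) xs)) (0::nat)"
proof (induction xs)
  case (Cons x xs)
  show ?case
  proof (cases "x = 0")
    case True
    with Cons.prems have "\<forall>y\<in>set xs. y = 0"
      by auto
    with True show ?thesis
      by (simp add: replicate_length_same)
  qed (use Cons in simp)
qed simp

lemma drop_column_add_column: "drop_column (add_column n ys) = ys"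
proof -
  have "takeWhile ((<) 0) (map Suc ys @ replicate (n - length ys) 0)
      = map Suc ys @ takeWhile ((<) 0) (replicate (n - length ys) 0)"
    by (rule takeWhile_append2) auto
  also have "takeWhile ((<) 0) (replicate (n - length ys) (0::nat)) = []"
    by (cases "n - length ys") simp_all
  finally have "takeWhile ((<) 0) (map Suc ys @ replicate (n - length ys) 0) = map Suc ys"
    by simp
  then show ?thesis
    unfolding drop_column_def add_column_def by (simp add: comp_def)
qed

lemma add_column_drop_column:
  assumes "xs \<in> parts n"
  shows "add_column n (drop_column xs) = xs"
proof -
  have "map Suc (drop_column xs) = takeWhile ((<) 0) xs"
    unfolding drop_column_def map_map by (rule map_idI) (auto dest: set_takeWhileD)
  then show ?thesis
    using assms sorted_desc_eq_takeWhile_pos_append_zeros[of xs]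
    unfolding add_column_def in_parts_iff by (simp add: drop_column_def)
qed

lemma add_column_in_parts:
  assumes "ys \<in> parts k" and "k \<le> n"
  shows "add_column n ys \<in> parts n"
proof -
  have "sorted_wrt (\<ge>) (replicate m (0::nat))" for m
    by (induction m) auto
  then show ?thesis
    using assms unfolding add_column_def in_parts_iff
    by (auto simp: sorted_wrt_append sorted_wrt_map)
qed

lemma drop_column_in_parts:
  assumes "xs \<in> parts n"
  shows "drop_column xs \<in> parts (length (drop_column xs))" and "length (drop_column xs) \<le> n"
proof -
  have "sorted_wrt (\<ge>) (takeWhile ((<) 0) xs)"
    using assms unfolding in_parts_iff by (metis sorted_wrt_append takeWhile_dropWhile_id)
  then have "sorted_wrt (\<lambda>x y. y - 1 \<le> x - (1::nat)) (takeWhile ((<) 0) xs)"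
    by (rule sorted_wrt_mono_rel[rotated]) (simp add: diff_le_mono)
  then show "drop_column xs \<in> parts (length (drop_column xs))"
    unfolding drop_column_def in_parts_iff by (simp add: sorted_wrt_map)
  show "length (drop_column xs) \<le> n"
    using assms length_takeWhile_le[of "(<) 0" xs] unfolding drop_column_def in_parts_iff by simp
qed

lemma bij_betw_add_column:
  "bij_betw (\<lambda>(k, ys). add_column n ys) (SIGMA k:{..n}. parts k) (parts n)"
proof (rule bij_betw_byWitness[where f' = "\<lambda>xs. (length (drop_column xs), drop_column xs)"])
  show "\<forall>p \<in> (SIGMA k:{..n}. parts k). (\<lambda>xs. (length (drop_column xs), drop_column xs))
      ((\<lambda>(k, ys). add_column n ys) p) = p"
    by (auto simp: drop_column_add_column in_parts_iff)
  show "(\<lambda>(k, ys). add_column n ys) ` (SIGMA k:{..n}. parts k) \<subseteq> parts n"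
    by (auto intro: add_column_in_parts)
  show "(\<lambda>xs. (length (drop_column xs), drop_column xs)) ` parts n \<subseteq> (SIGMA k:{..n}. parts k)"
    using drop_column_in_parts by auto
qed (simp add: add_column_drop_column)

lemma Clam_map_Suc: "Clam (map Suc ys) q = Clam ys q"
  unfolding Clam_def by (simp add: prod.reindex count_list_map_conv)

lemma Clam_append_replicate:
  assumes "v \<notin> set xs"
  shows "Clam (xs @ replicate m v) q = Clam xs q / qfact2 m q"
proof (cases "m = 0")
  case False
  have count: "count_list (replicate m v) w = (if w = v then m else 0)" for w
    by (induction m) auto
  have "Clam (xs @ replicate m v) q
      = 1 / qfact2 m q * (\<Prod>w\<in>set xs. 1 / qfact2 (count_list (xs @ replicate m v) w) q)"
    unfolding Clam_def using False assms by (simp add: count)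
  also have "(\<Prod>w\<in>set xs. 1 / qfact2 (count_list (xs @ replicate m v) w) q) = Clam xs q"
    unfolding Clam_def using assms by (intro prod.cong) (auto simp: count)
  finally show ?thesis by simp
qed simp

lemma Clam_add_column: "Clam (add_column n ys) q = Clam ys q / qfact2 (n - length ys) q"
  unfolding add_column_def by (subst Clam_append_replicate) (auto simp: Clam_map_Suc)

lemma wt_append_replicate_0: "wt (xs @ replicate m 0) = wt xs"
proof (induction m)
  case (Suc m)
  have "xs @ replicate (Suc m) 0 = (xs @ replicate m 0) @ [0]"
    by (simp add: replicate_append_same)
  moreover have "wt (zs @ [0]) = wt zs" for zs
    unfolding wt_def by (simp add: nth_append)
  ultimately show ?case
    using Suc.IH by (simp only:)
qed simp

lemma wt_map_Suc: "2 * wt (map Suc ys) = 2 * wt ys + length ys * Suc (length ys)"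
proof -
  have "(\<Sum>i<length ys. (i + 1) * map Suc ys ! i) = (\<Sum>i<length ys. (i + 1) * ys ! i + Suc i)"
    by (rule sum.cong) auto
  then have "wt (map Suc ys) = wt ys + (\<Sum>i<length ys. Suc i)"
    unfolding wt_def by (simp only: sum.distrib length_map)
  moreover have "2 * (\<Sum>i<k. Suc i) = k * Suc k" for k
    by (induction k) simp_all
  ultimately show ?thesis by simp
qed

lemma wt_add_column: "2 * wt (add_column n ys) = 2 * wt ys + length ys * Suc (length ys)"
  unfolding add_column_def wt_append_replicate_0 by (rule wt_map_Suc)

definition partition_term :: "complex \<Rightarrow> nat list \<Rightarrow> complex" where
  "partition_term q xs = Clam xs q * q ^ (4 * wt xs)"

lemma partition_term_add_column:
  "partition_term q (add_column n ys)
     = (q\<^sup>2) ^ (length ys * Suc (length ys)) / qfact2 (n - length ys) q * partition_term q ys"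
proof -
  have "4 * wt (add_column n ys) = 4 * wt ys + 2 * (length ys * Suc (length ys))"
    using wt_add_column[of n ys] by simp
  then have "q ^ (4 * wt (add_column n ys)) = q ^ (4 * wt ys) * (q\<^sup>2) ^ (length ys * Suc (length ys))"
    by (simp add: power_add power_mult)
  then show ?thesis
    unfolding partition_term_def Clam_add_column by simp
qed

section \<open>Convergence\<close>

lemma summable_on_power_sum_list:
  fixes r :: real
  assumes "0 \<le> r" and "r < 1"
  shows "(\<lambda>xs. r ^ sum_list xs) summable_on {xs::nat list. length xs = n}"
proof (induction n)
  case 0
  have "{xs::nat list. length xs = 0} = {[]}" by auto
  then show ?case by simp
next
  case (Suc n)
  define L where "L = {xs::nat list. length xs = n}"
  have bij: "bij_betw (\<lambda>(x, ys). x # ys) (UNIV \<times> L) {xs. length xs = Suc n}"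
    unfolding L_def bij_betw_def inj_on_def by (auto simp: length_Suc_conv)
  have geometric: "(\<lambda>x. r ^ x) summable_on UNIV"
    using assms by (intro norm_summable_imp_summable_on) (simp add: summable_geometric)
  have "(\<lambda>(x, ys). r ^ x * r ^ sum_list ys) summable_on UNIV \<times> L"
  proof (rule summable_on_SigmaI)
    show "((\<lambda>ys. case (x, ys) of (x, ys) \<Rightarrow> r ^ x * r ^ sum_list ys)
        has_sum r ^ x * infsum (\<lambda>ys. r ^ sum_list ys) L) L" for x
      using has_sum_cmult_right[OF has_sum_infsum[OF Suc.IH[folded L_def]]] by simp
    show "(\<lambda>x. r ^ x * infsum (\<lambda>ys. r ^ sum_list ys) L) summable_on UNIV"
      by (rule summable_on_cmult_left[OF geometric])
  qed (use assms in simp)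
  then show ?case
    using summable_on_reindex_bij_betw[OF bij, of "\<lambda>xs. r ^ sum_list xs"]
    by (simp add: case_prod_unfold power_add)
qed

lemma norm_inverse_qint2_le:
  assumes q: "norm q < 1" and k: "0 < k"
  shows "norm (1 / qint2 k q) \<le> 2 / (1 - norm q ^ 2)"
proof -
  define t where "t = q\<^sup>2"
  have nt: "norm t = norm q ^ 2" and "norm t < 1"
    unfolding t_def using norm_power2_less_1[OF q] by (simp_all add: norm_power)
  have "norm (1 - t) \<le> 2"
    using norm_triangle_ineq4[of 1 t] \<open>norm t < 1\<close> by simp
  moreover have "1 - norm t \<le> norm (1 - t ^ k)"
  proof -
    have "norm t ^ k \<le> norm t"
      using power_decreasing[of 1 k "norm t"] k \<open>norm t < 1\<close> by simp
    then show ?thesis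
      using norm_triangle_ineq2[of 1 "t ^ k"] by (simp add: norm_power)
  qed
  ultimately have "norm (1 - t) / norm (1 - t ^ k) \<le> 2 / (1 - norm t)"
    using \<open>norm t < 1\<close> by (intro frac_le) auto
  then show ?thesis
    by (simp add: qint2_eq norm_divide nt flip: t_def)
qed

lemma norm_inverse_qfact2_le:
  assumes q: "norm q < 1"
  shows "norm (1 / qfact2 m q) \<le> (2 / (1 - norm q ^ 2)) ^ m"
proof (induction m)
  case (Suc m)
  have "norm q ^ 2 < 1"
    using q by (simp add: abs_square_less_1)
  then have "0 \<le> 2 / (1 - norm q ^ 2)"
    by simp
  then have "norm (1 / qfact2 m q) * norm (1 / qint2 (Suc m) q)
      \<le> (2 / (1 - norm q ^ 2)) ^ m * (2 / (1 - norm q ^ 2))"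
    by (intro mult_mono Suc.IH norm_inverse_qint2_le q) simp_all
  then show ?case
    by (simp add: qfact2_Suc norm_divide norm_mult mult.commute)
qed simp

lemma norm_Clam_le:
  assumes "norm q < 1"
  shows "norm (Clam xs q) \<le> (2 / (1 - norm q ^ 2)) ^ length xs"
proof -
  define K where "K = 2 / (1 - norm q ^ 2)"
  have "norm (Clam xs q) = (\<Prod>v\<in>set xs. norm (1 / qfact2 (count_list xs v) q))"
    unfolding Clam_def by (simp add: prod_norm)
  also have "\<dots> \<le> (\<Prod>v\<in>set xs. K ^ count_list xs v)"
    unfolding K_def using norm_inverse_qfact2_le[OF assms] by (intro prod_mono) simp
  also have "\<dots> = K ^ length xs"
    by (simp add: sum_count_set flip: power_sum)
  finally show ?thesis
    unfolding K_def .
qed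

lemma sum_list_le_wt: "sum_list xs \<le> wt xs"
proof -
  have "sum_list xs = (\<Sum>i<length xs. xs ! i)"
    by (simp add: sum_list_sum_nth atLeast0LessThan)
  also have "\<dots> \<le> wt xs"
    unfolding wt_def by (rule sum_mono) simp
  finally show ?thesis .
qed

lemma summable_partition_term:
  assumes q: "norm q < 1"
  shows "partition_term q summable_on parts n"
proof -
  define r where "r = norm q ^ 4"
  define M where "M = (2 / (1 - norm q ^ 2)) ^ n"
  have "norm q ^ 2 < 1"
    using q by (simp add: abs_square_less_1)
  then have "0 \<le> M"
    unfolding M_def by simp
  have r: "0 \<le> r" "r < 1"
    unfolding r_def using q power_less_one_iff[OF norm_ge_zero, of q 4] by simp_all
  have "parts n \<subseteq> {xs. length xs = n}"
    by (auto simp: parts_def)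
  then have "(\<lambda>xs. M * r ^ sum_list xs) summable_on parts n"
    by (rule summable_on_cmult_right[OF summable_on_subset_banach[OF summable_on_power_sum_list[OF r]]])
  moreover have "norm (partition_term q xs) \<le> M * r ^ sum_list xs" if "xs \<in> parts n" for xs
  proof -
    have "norm q ^ (4 * wt xs) \<le> norm q ^ (4 * sum_list xs)"
      using sum_list_le_wt[of xs] q by (intro power_decreasing) auto
    then have "norm (q ^ (4 * wt xs)) \<le> r ^ sum_list xs"
      by (simp add: r_def norm_power power_mult)
    moreover have "norm (Clam xs q) \<le> M"
      using norm_Clam_le[OF q, of xs] that by (simp add: M_def parts_def)
    ultimately show ?thesis
      unfolding partition_term_def norm_mult using \<open>0 \<le> M\<close> by (simp add: mult_mono)
  qed
  ultimately have "(\<lambda>xs. norm (partition_term q xs)) summable_on parts n"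
    by (rule Infinite_Sum.abs_summable_on_comparison_test')
  then show ?thesis
    by (rule abs_summable_summable)
qed

section \<open>Evaluation of the series\<close>

lemma infsum_partition_term_recurrence:
  assumes q: "norm q < 1"
  shows "infsum (partition_term q) (parts n)
       = (\<Sum>k\<le>n. (q\<^sup>2) ^ (k * Suc k) / qfact2 (n - k) q * infsum (partition_term q) (parts k))"
proof -
  let ?g = "\<lambda>(k, ys). partition_term q (add_column n ys)"
  have "?g summable_on (SIGMA k:{..n}. parts k)"
    using summable_on_reindex_bij_betw[OF bij_betw_add_column[of n], of "partition_term q"]
      summable_partition_term[OF q, of n]
    by (simp add: case_prod_unfold)
  moreover have "infsum (partition_term q) (parts n) = infsum ?g (SIGMA k:{..n}. parts k)"
    using infsum_reindex_bij_betw[OF bij_betw_add_column[of n], of "partition_term q"]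
    by (simp add: case_prod_unfold)
  ultimately have "infsum (partition_term q) (parts n)
      = (\<Sum>k\<le>n. \<Sum>\<^sub>\<infinity>ys\<in>parts k. ?g (k, ys))"
    using infsum_Sigma_banach[of ?g "{..n}" parts] by simp
  also have "\<dots>
      = (\<Sum>k\<le>n. (q\<^sup>2) ^ (k * Suc k) / qfact2 (n - k) q * infsum (partition_term q) (parts k))"
  proof (rule sum.cong[OF refl])
    fix k
    have "(\<Sum>\<^sub>\<infinity>ys\<in>parts k. ?g (k, ys))
        = (\<Sum>\<^sub>\<infinity>ys\<in>parts k. (q\<^sup>2) ^ (k * Suc k) / qfact2 (n - k) q * partition_term q ys)"
      by (intro infsum_cong) (simp add: partition_term_add_column parts_def)
    also have "\<dots> = (q\<^sup>2) ^ (k * Suc k) / qfact2 (n - k) q * infsum (partition_term q) (parts k)"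
      by (rule infsum_cmult_right')
    finally show "(\<Sum>\<^sub>\<infinity>ys\<in>parts k. ?g (k, ys))
        = (q\<^sup>2) ^ (k * Suc k) / qfact2 (n - k) q * infsum (partition_term q) (parts k)" .
  qed
  finally show ?thesis .
qed

lemma recurrence_solution_unique:
  fixes F G :: "nat \<Rightarrow> 'a::field"
  assumes "F 0 = G 0"
    and "\<And>n. 0 < n \<Longrightarrow> c n n \<noteq> 1"
    and "\<And>n. 0 < n \<Longrightarrow> F n = (\<Sum>k\<le>n. c n k * F k)"
    and "\<And>n. 0 < n \<Longrightarrow> G n = (\<Sum>k\<le>n. c n k * G k)"
  shows "F n = G n"
proof (induction n rule: less_induct)
  case (less n)
  show ?case
  proof (cases n)
    case (Suc m)
    define R where "R = (\<Sum>k\<le>m. c n k * G k)"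
    have "(\<Sum>k\<le>m. c n k * F k) = R"
      unfolding R_def using less.IH Suc by (intro sum.cong) auto
    then have F: "R + c n n * F n = F n" and G: "R + c n n * G n = G n"
      using assms(3,4)[of n] Suc unfolding R_def by simp_all
    have "(1 - c n n) * (F n - G n) = (F n - (R + c n n * F n)) - (G n - (R + c n n * G n))"
      by (simp add: algebra_simps)
    then have "(1 - c n n) * (F n - G n) = 0"
      by (simp only: F G diff_self)
    then show ?thesis
      using assms(2)[of n] Suc by simp
  qed (use assms(1) in simp)
qed

lemma infsum_partition_term:
  assumes q: "norm q < 1"
  shows "infsum (partition_term q) (parts n) = 1 / ((1 - q\<^sup>2) ^ n * qfact2 n q * qfact2 (Suc n) q)"
proof (rule recurrence_solution_unique[where F = "\<lambda>n. infsum (partition_term q) (parts n)"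
      and G = "\<lambda>n. 1 / ((1 - q\<^sup>2) ^ n * qfact2 n q * qfact2 (Suc n) q)"
      and c = "\<lambda>n k. (q\<^sup>2) ^ (k * Suc k) / qfact2 (n - k) q"])
  have "q\<^sup>2 \<noteq> 1"
    using norm_power2_less_1[OF q] by auto
  moreover have "parts 0 = {[]}"
    by (auto simp: parts_def)
  ultimately show "infsum (partition_term q) (parts 0) = 1 / ((1 - q\<^sup>2) ^ 0 * qfact2 0 q * qfact2 (Suc 0) q)"
    by (simp add: partition_term_def Clam_def wt_def qfact2_Suc qint2_def)
  show "(q\<^sup>2) ^ (m * Suc m) / qfact2 (m - m) q \<noteq> 1" if "0 < m" for m
  proof -
    have "norm (q\<^sup>2) ^ (m * Suc m) < 1"
      using norm_power2_less_1[OF q] that by (simp add: power_less_one_iff)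
    then show ?thesis
      by (auto simp flip: norm_power)
  qed
  show "infsum (partition_term q) (parts m)
      = (\<Sum>k\<le>m. (q\<^sup>2) ^ (k * Suc k) / qfact2 (m - k) q * infsum (partition_term q) (parts k))" for m
    by (rule infsum_partition_term_recurrence[OF q])
  show "1 / ((1 - q\<^sup>2) ^ m * qfact2 m q * qfact2 (Suc m) q)
      = (\<Sum>k\<le>m. (q\<^sup>2) ^ (k * Suc k) / qfact2 (m - k) q
                 * (1 / ((1 - q\<^sup>2) ^ k * qfact2 k q * qfact2 (Suc k) q)))" for m
    by (rule qfact2_recurrence[OF q])
qed

theorem mainTheorem12:
  fixes q :: complex and n :: nat
  assumes "norm q < 1" and "n \<ge> 1"
  shows "(\<lambda>xs. Clam xs q * q ^ (4 * wt xs)) summable_on parts n \<and>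
         1 / (qfact2 n q * qfact2 (n + 1) q)
           = (1 - q\<^sup>2) ^ n * (\<Sum>\<^sub>\<infinity> xs \<in> parts n. Clam xs q * q ^ (4 * wt xs))"
proof
  show "(\<lambda>xs. Clam xs q * q ^ (4 * wt xs)) summable_on parts n"
    using summable_partition_term[OF assms(1)] unfolding partition_term_def .
  have "1 - q\<^sup>2 \<noteq> 0"
    using norm_power2_less_1[OF assms(1)] by auto
  then show "1 / (qfact2 n q * qfact2 (n + 1) q)
      = (1 - q\<^sup>2) ^ n * (\<Sum>\<^sub>\<infinity> xs \<in> parts n. Clam xs q * q ^ (4 * wt xs))"
    using infsum_partition_term[OF assms(1), of n] unfolding partition_term_def by simp
qed

end
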